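(* Let $K=3$ and let $l\ge m\ge s\ge 0$ be integers with $m\ge s+2$. Then \[ h(l,\,m,\,s)\ \le\ h(l-1,\,m-1,\,s+2). \]
   Context: For a vector $\vec n=(n_1,n_2,n_3)$ of nonnegative integers, the following random process is run: stocks start at $\vec n^{(0)}=\vec n$; at each step $t=1,2,\dots$, as long as at least two coordinates of $\vec n^{(t-1)}$ are nonzero, an index $i$ is chosen uniformly at random (independently of the past) among the indices with $n_i^{(t-1)}>0$, and $\vec n^{(t)}=\vec n^{(t-1)}-\vec e_i$ ($\vec e_i$ the $i$-th standard unit vector). The process stops at the first time $T$ at which at most one coordinate is nonzero, and $h(\vec n)=\mathbb{E}[T]$. Equivalently, with $\operatorname{support}(\vec n)=\{i:n_i\ne 0\}$: $h(\vec n)=0$ if $|\operatorname{support}(\vec n)|\le1$, and otherwise $h(\vec n)=1+\frac{1}{|\operatorname{support}(\vec n)|}\sum_{i\in\operatorname{support}(\vec n)}h(\vec n-\vec e_i)$. *)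

theory Defs
  imports Complex_Main
begin

text \<open>Stock vector n = (n1,n2,n3) represented as a function on indices {0,1,2}
 (index i of the paper = i-1 here). support, unit-vector decrement and h as in the paper.\<close>

definition vec3 :: "nat \<Rightarrow> nat \<Rightarrow> nat \<Rightarrow> (nat \<Rightarrow> nat)" where
  "vec3 a b c = (\<lambda>i. if i = 0 then a else if i = 1 then b else if i = 2 then c else 0)"

definition supp3 :: "nat \<times> nat \<times> nat \<Rightarrow> nat set" where
  "supp3 v = {i \<in> {0,1,2}. (case v of (a,b,c) \<Rightarrow> vec3 a b c) i \<noteq> 0}"

definition dec3 :: "nat \<times> nat \<times> nat \<Rightarrow> nat \<Rightarrow> nat \<times> nat \<times> nat" where
  "dec3 v i = (case v of (a,b,c) \<Rightarrow>
      (if i = 0 then a - 1 else a, if i = 1 then b - 1 else b, if i = 2 then c - 1 else c))"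

function h :: "nat \<times> nat \<times> nat \<Rightarrow> real" where
  "h v = (if card (supp3 v) \<le> 1 then 0
          else 1 + (1 / real (card (supp3 v))) * (\<Sum>i\<in>supp3 v. h (dec3 v i)))"
  by auto
termination
proof (relation "measure (\<lambda>(a,b,c). a + b + c)")
  show "wf (measure (\<lambda>(a,b,c). a + b + c))" by simp
next
  fix v :: "nat \<times> nat \<times> nat" and i
  assume "\<not> card (supp3 v) \<le> 1" "i \<in> supp3 v"
  then show "(dec3 v i, v) \<in> measure (\<lambda>(a,b,c). a + b + c)"
    by (cases v) (auto simp: supp3_def dec3_def vec3_def split: if_splits)
qed

end

theory Submission
  imports Defs
begin

(* By first-step analysis h(v) is 1 plus the mean of h over the configurations v - e_i, so an
   inequality between values of h follows from inequalities with one stone less, provided the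
   family of inequalities used is closed under this step. Three families are closed in this sense:
   moving a stone from a largest pile to a pile that stays no larger does not decrease h
   (h_transfer); removing a stone from a smallest pile decreases h at least as much as the mean of
   removing it from one of the two other piles (h_remove_min_le_mean); adding a stone to a smallest
   pile increases h at least as much as the mean of adding it to one of the two other piles
   (h_add_min_ge_mean), which at the boundary needs concavity of h along the lines a + b = const
   of the two-pile process. The first two are proved by a joint induction on the number of stones.
   The theorem is the sum of the last two:
   2 h(a+1,b+1,c) <= h(a,b+1,c+1) + h(a+1,b,c+1) <= 2 h(a,b,c+2). *)

declare h.simps [simp del]

lemma h_nonneg: "0 \<le> h v"
proof (induction v rule: h.induct)
  case (1 v)
  then show ?case by (subst h.simps) (simp add: sum_nonneg)
qed

lemma h_eq_0_if_supp3_subset_singleton: "supp3 v \<subseteq> {i} \<Longrightarrow> h v = 0"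
  using card_mono[of "{i}" "supp3 v"] by (simp add: h.simps[of v])

lemma h_single_pile: "h (a, 0, 0) = 0" "h (0, b, 0) = 0" "h (0, 0, c) = 0"
  by (rule h_eq_0_if_supp3_subset_singleton; auto simp: supp3_def vec3_def)+

lemma h_Suc_Suc_Suc:
  "h (Suc a, Suc b, Suc c) =
    1 + h (a, Suc b, Suc c) / 3 + h (Suc a, b, Suc c) / 3 + h (Suc a, Suc b, c) / 3"
proof -
  have "supp3 (Suc a, Suc b, Suc c) = {0, 1, 2}" by (auto simp: supp3_def vec3_def)
  then show ?thesis by (simp add: h.simps[of "(Suc a, Suc b, Suc c)"] dec3_def)
qed

lemma h_Suc_Suc_0: "h (Suc a, Suc b, 0) = 1 + h (a, Suc b, 0) / 2 + h (Suc a, b, 0) / 2"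
proof -
  have "supp3 (Suc a, Suc b, 0) = {0, 1}" by (auto simp: supp3_def vec3_def)
  then show ?thesis by (simp add: h.simps[of "(Suc a, Suc b, 0)"] dec3_def)
qed

lemma h_Suc_0_Suc: "h (Suc a, 0, Suc c) = 1 + h (a, 0, Suc c) / 2 + h (Suc a, 0, c) / 2"
proof -
  have "supp3 (Suc a, 0, Suc c) = {0, 2}" by (auto simp: supp3_def vec3_def)
  then show ?thesis by (simp add: h.simps[of "(Suc a, 0, Suc c)"] dec3_def)
qed

lemma h_0_Suc_Suc: "h (0, Suc b, Suc c) = 1 + h (0, b, Suc c) / 2 + h (0, Suc b, c) / 2"
proof -
  have "supp3 (0, Suc b, Suc c) = {1, 2}" by (auto simp: supp3_def vec3_def)
  then show ?thesis by (simp add: h.simps[of "(0, Suc b, Suc c)"] dec3_def)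
qed

lemma h_swap12_swap23: "h (a, b, c) = h (b, a, c) \<and> h (a, b, c) = h (a, c, b)"
proof (induction "a + b + c" arbitrary: a b c rule: less_induct)
  case less
  then show ?case
    by (cases a; cases b; cases c)
      (simp_all add: h_Suc_Suc_Suc h_Suc_Suc_0 h_Suc_0_Suc h_0_Suc_Suc h_single_pile)
qed

lemma h_swap12: "h (a, b, c) = h (b, a, c)"
  using h_swap12_swap23 by blast

lemma h_swap23: "h (a, b, c) = h (a, c, b)"
  using h_swap12_swap23 by blast

lemma h_swap13: "h (a, b, c) = h (c, b, a)"
  by (metis h_swap12 h_swap23)

lemma h_one_stone_le_2: "h (1, b, 0) \<le> 2"
proof (induction b)
  case (Suc b)
  then show ?case using h_Suc_Suc_0[of 0 b] by (simp add: h_single_pile)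
qed (simp add: h_single_pile)

lemma h_two_piles_concave_edge: "h (2, b, 0) \<le> 2 * h (1, Suc b, 0)"
proof (induction b)
  case 0
  show ?case using h_nonneg[of "(1, 1, 0)"] by (simp add: h_single_pile)
next
  case (Suc b)
  have "h (2, Suc b, 0) = 1 + h (1, Suc b, 0) / 2 + h (2, b, 0) / 2"
    using h_Suc_Suc_0[of 1 b] by (simp add: numeral_2_eq_2)
  moreover have "h (1, Suc (Suc b), 0) = 1 + h (1, Suc b, 0) / 2"
    using h_Suc_Suc_0[of 0 "Suc b"] by (simp add: h_single_pile)
  ultimately show ?case using Suc h_one_stone_le_2[of "Suc b"] by linarith
qed

lemma h_two_piles_concave:
  "h (a, Suc (Suc b), 0) + h (Suc (Suc a), b, 0) \<le> 2 * h (Suc a, Suc b, 0)"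
proof (induction "a + b" arbitrary: a b rule: less_induct)
  case less
  consider "a = 0" | "b = 0" | a' b' where "a = Suc a'" "b = Suc b'"
    by (cases a; cases b) auto
  then show ?case
  proof cases
    case 1
    then show ?thesis using h_two_piles_concave_edge[of b] by (simp add: h_single_pile numeral_2_eq_2)
  next
    case 2
    then show ?thesis
      using h_two_piles_concave_edge[of a] h_swap12[of a 2 0] h_swap12[of "Suc a" 1 0]
      by (simp add: h_single_pile numeral_2_eq_2)
  next
    case 3
    have "h (a', Suc (Suc b), 0) + h (Suc (Suc a'), b, 0) \<le> 2 * h (a, Suc b, 0)"
      using less[of a' b] 3 by simp
    moreover have "h (a, Suc b, 0) + h (Suc (Suc a), b', 0) \<le> 2 * h (Suc a, b, 0)"
      using less[of a b'] 3 by simp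
    ultimately show ?thesis
      using h_Suc_Suc_0[of a' "Suc b"] h_Suc_Suc_0[of "Suc a" b'] h_Suc_Suc_0[of a b] 3 by simp
  qed
qed

definition transfer_upto :: "nat \<Rightarrow> bool" where
  "transfer_upto n \<longleftrightarrow> (\<forall>a b c. a + b + c + 1 \<le> n \<longrightarrow> b \<le> Suc a \<longrightarrow> c \<le> a \<longrightarrow>
     h (Suc a, b, c) \<le> h (a, b, Suc c))"

definition remove_min_upto :: "nat \<Rightarrow> bool" where
  "remove_min_upto n \<longleftrightarrow> (\<forall>a b c. a + b + c + 2 \<le> n \<longrightarrow> c \<le> a \<longrightarrow> c \<le> b \<longrightarrow>
     2 * h (Suc a, Suc b, c) \<le> h (a, Suc b, Suc c) + h (Suc a, b, Suc c))"

lemma transfer_uptoD: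
  "transfer_upto n \<Longrightarrow> a + b + c + 1 \<le> n \<Longrightarrow> b \<le> Suc a \<Longrightarrow> c \<le> a \<Longrightarrow>
    h (Suc a, b, c) \<le> h (a, b, Suc c)"
  unfolding transfer_upto_def by blast

lemma remove_min_uptoD:
  "remove_min_upto n \<Longrightarrow> a + b + c + 2 \<le> n \<Longrightarrow> c \<le> a \<Longrightarrow> c \<le> b \<Longrightarrow>
    2 * h (Suc a, Suc b, c) \<le> h (a, Suc b, Suc c) + h (Suc a, b, Suc c)"
  unfolding remove_min_upto_def by blast

lemma transfer_pair:
  assumes T: "transfer_upto n" and Q: "remove_min_upto n"
    and "a + b + c + 2 \<le> n" "b \<le> Suc a" "c \<le> a"
  shows "h (Suc a, Suc b, c) + h (Suc (Suc a), b, c) \<le> h (a, Suc b, Suc c) + h (Suc a, b, Suc c)"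
proof (cases "b \<le> a")
  case True
  have "h (Suc a, Suc b, c) \<le> h (a, Suc b, Suc c)"
    by (rule transfer_uptoD[OF T]) (use assms True in auto)
  moreover have "h (Suc (Suc a), b, c) \<le> h (Suc a, b, Suc c)"
    by (rule transfer_uptoD[OF T]) (use assms in auto)
  ultimately show ?thesis by linarith
next
  case False
  \<comment> \<open>The pile a + 1 is no longer a largest one, so the first transfer is not available; instead
    the two left-hand terms coincide by symmetry and the remove-min inequality bounds their sum.\<close>
  then have "b = Suc a" using assms by simp
  moreover have "2 * h (Suc a, Suc (Suc a), c) \<le> h (a, Suc (Suc a), Suc c) + h (Suc a, Suc a, Suc c)"
    by (rule remove_min_uptoD[OF Q]) (use assms \<open>b = Suc a\<close> in auto)
  ultimately show ?thesis using h_swap12[of "Suc (Suc a)" "Suc a" c] by simp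
qed

lemma transfer_upto_Suc:
  assumes T: "transfer_upto n" and Q: "remove_min_upto n"
  shows "transfer_upto (Suc n)"
  unfolding transfer_upto_def
proof (intro allI impI)
  fix a b c
  assume level: "a + b + c + 1 \<le> Suc n" and "b \<le> Suc a" "c \<le> a"
  show "h (Suc a, b, c) \<le> h (a, b, Suc c)"
  proof (cases "c = a")
    case True
    then show ?thesis by (metis h_swap13 order_refl)
  next
    case False
    then obtain a' where a: "a = Suc a'" and "c \<le> a'"
      using \<open>c \<le> a\<close> by (cases a) auto
    consider "b = 0" "c = 0" | c' where "b = 0" "c = Suc c'" | b' where "b = Suc b'" "c = 0"
      | b' c' where "b = Suc b'" "c = Suc c'"
      by (cases b; cases c) auto
    then show ?thesis
    proof cases
      case 1
      then show ?thesis using h_nonneg[of "(a, 0, 1)"] by (simp add: h_single_pile)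
    next
      case (2 c')
      have "h (Suc a, 0, c') \<le> h (a, 0, Suc c')"
        by (rule transfer_uptoD[OF T]) (use level 2 \<open>c \<le> a\<close> in auto)
      moreover have "h (Suc a', 0, c) \<le> h (a', 0, Suc c)"
        by (rule transfer_uptoD[OF T]) (use level 2 a \<open>c \<le> a'\<close> in auto)
      ultimately show ?thesis
        using h_Suc_0_Suc[of a c'] h_Suc_0_Suc[of a' c] 2 a by simp
    next
      case (3 b')
      have "h (a, Suc b', 0) + h (Suc a, b', 0) \<le> h (a', Suc b', 1) + h (a, b', 1)"
        using transfer_pair[OF T Q, of a' b' 0] level 3 a \<open>b \<le> Suc a\<close> by simp
      moreover have "h (Suc a, 0, b') \<le> h (a, 0, Suc b')"
        by (rule transfer_uptoD[OF T]) (use level 3 \<open>b \<le> Suc a\<close> in auto)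
      ultimately show ?thesis
        using h_Suc_Suc_0[of a b'] h_Suc_Suc_Suc[of a' b' 0] 3 a
          h_swap23[of "Suc a" b' 0] h_swap23[of a "Suc b'" 0]
        by simp
    next
      case (4 b' c')
      have "h (a, Suc b', c) + h (Suc a, b', c) \<le> h (a', Suc b', Suc c) + h (a, b', Suc c)"
        using transfer_pair[OF T Q, of a' b' c] level 4 a \<open>b \<le> Suc a\<close> \<open>c \<le> a'\<close> by simp
      moreover have "h (Suc a, Suc b', c') \<le> h (a, Suc b', Suc c')"
        by (rule transfer_uptoD[OF T]) (use level 4 \<open>b \<le> Suc a\<close> \<open>c \<le> a\<close> in auto)
      ultimately show ?thesis
        using h_Suc_Suc_Suc[of a b' c'] h_Suc_Suc_Suc[of a' b' c] 4 a by simp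
    qed
  qed
qed

lemma remove_min_edge:
  assumes "transfer_upto n" "b + c + c + 2 \<le> n" "c \<le> b"
  shows "2 * h (Suc c, Suc b, c) \<le> h (c, Suc b, Suc c) + h (Suc c, b, Suc c)"
proof -
  have "h (Suc b, Suc c, c) \<le> h (b, Suc c, Suc c)"
    by (rule transfer_uptoD) (use assms in auto)
  then show ?thesis
    using h_swap13[of c "Suc b" "Suc c"] h_swap12[of "Suc c" "Suc b" c] h_swap12[of "Suc c" b "Suc c"]
    by simp
qed

lemma remove_min_interior:
  assumes Q: "remove_min_upto n" and "a + b + c + 3 \<le> n" "c \<le> a" "c \<le> b"
  shows "2 * h (Suc (Suc a), Suc (Suc b), c) \<le>
    h (Suc a, Suc (Suc b), Suc c) + h (Suc (Suc a), Suc b, Suc c)"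
proof -
  have ih_a:
    "2 * h (Suc a, Suc (Suc b), c) \<le> h (a, Suc (Suc b), Suc c) + h (Suc a, Suc b, Suc c)"
    by (rule remove_min_uptoD[OF Q]) (use assms in auto)
  have ih_b:
    "2 * h (Suc (Suc a), Suc b, c) \<le> h (Suc a, Suc b, Suc c) + h (Suc (Suc a), b, Suc c)"
    by (rule remove_min_uptoD[OF Q]) (use assms in auto)
  show ?thesis
  proof (cases c)
    case 0
    with ih_a ih_b show ?thesis
      using h_Suc_Suc_0[of "Suc a" "Suc b"] h_Suc_Suc_Suc[of a "Suc b" 0] h_Suc_Suc_Suc[of "Suc a" b 0]
      by simp
  next
    case (Suc c')
    have "2 * h (Suc (Suc a), Suc (Suc b), c') \<le>
        h (Suc a, Suc (Suc b), Suc c') + h (Suc (Suc a), Suc b, Suc c')"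
      by (rule remove_min_uptoD[OF Q]) (use assms Suc in auto)
    with ih_a ih_b show ?thesis
      using h_Suc_Suc_Suc[of "Suc a" "Suc b" c'] h_Suc_Suc_Suc[of a "Suc b" c]
        h_Suc_Suc_Suc[of "Suc a" b c] Suc
      by simp
  qed
qed

lemma remove_min_upto_Suc:
  assumes T: "transfer_upto (Suc n)" and Q: "remove_min_upto n"
  shows "remove_min_upto (Suc n)"
  unfolding remove_min_upto_def
proof (intro allI impI)
  fix a b c
  assume level: "a + b + c + 2 \<le> Suc n" and "c \<le> a" "c \<le> b"
  consider "c = a" | "c = b" | a' b' where "a = Suc a'" "b = Suc b'" "c \<le> a'" "c \<le> b'"
    using \<open>c \<le> a\<close> \<open>c \<le> b\<close> by (cases a; cases b) (auto simp: le_Suc_eq)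
  then show "2 * h (Suc a, Suc b, c) \<le> h (a, Suc b, Suc c) + h (Suc a, b, Suc c)"
  proof cases
    case 1
    then show ?thesis using remove_min_edge[OF T, of b c] level \<open>c \<le> b\<close> by simp
  next
    case 2
    then show ?thesis
      using remove_min_edge[OF T, of a c] level \<open>c \<le> a\<close>
        h_swap12[of "Suc c" "Suc a" c] h_swap12[of c "Suc a" "Suc c"] h_swap12[of "Suc c" a "Suc c"]
      by simp
  next
    case 3
    then show ?thesis using remove_min_interior[OF Q, of a' b' c] level by simp
  qed
qed

lemma transfer_and_remove_min_upto: "transfer_upto n \<and> remove_min_upto n"
proof (induction n)
  case 0
  show ?case by (simp add: transfer_upto_def remove_min_upto_def)
next
  case (Suc n)
  then have "transfer_upto (Suc n)" by (blast intro: transfer_upto_Suc)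
  with Suc show ?case by (blast intro: remove_min_upto_Suc)
qed

theorem h_transfer: "b \<le> Suc a \<Longrightarrow> c \<le> a \<Longrightarrow> h (Suc a, b, c) \<le> h (a, b, Suc c)"
  using transfer_and_remove_min_upto transfer_uptoD by blast

theorem h_remove_min_le_mean:
  "c \<le> a \<Longrightarrow> c \<le> b \<Longrightarrow> 2 * h (Suc a, Suc b, c) \<le> h (a, Suc b, Suc c) + h (Suc a, b, Suc c)"
  using transfer_and_remove_min_upto remove_min_uptoD by blast

lemma add_min_edge: "c \<le> b \<Longrightarrow> h (c, Suc b, c) + h (Suc c, b, c) \<le> 2 * h (c, b, Suc c)"
  using h_transfer[of c b c] h_swap12[of c "Suc b" c] h_swap12[of c b "Suc c"]
    h_swap13[of "Suc c" b c]
  by simp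

theorem h_add_min_ge_mean:
  "c \<le> a \<Longrightarrow> c \<le> b \<Longrightarrow> h (a, Suc b, c) + h (Suc a, b, c) \<le> 2 * h (a, b, Suc c)"
proof (induction "a + b + c" arbitrary: a b c rule: less_induct)
  case less
  consider "c = a" | "c = b" | a' b' where "a = Suc a'" "b = Suc b'" "c \<le> a'" "c \<le> b'"
    using less.prems by (cases a; cases b) (auto simp: le_Suc_eq)
  then show ?case
  proof cases
    case 1
    then show ?thesis using add_min_edge less.prems by simp
  next
    case 2
    then show ?thesis
      using add_min_edge[of c a] less.prems
        h_swap12[of a "Suc c" c] h_swap12[of "Suc a" c c] h_swap12[of a c "Suc c"]
      by simp
  next
    case 3
    have ih_a: "h (a', Suc b, c) + h (a, b, c) \<le> 2 * h (a', b, Suc c)"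
      using less.hyps[of a' b c] 3 by simp
    have ih_b: "h (a, b, c) + h (Suc a, b', c) \<le> 2 * h (a, b', Suc c)"
      using less.hyps[of a b' c] 3 by simp
    show ?thesis
    proof (cases c)
      case 0
      with ih_a ih_b show ?thesis
        using h_two_piles_concave[of a' b'] h_Suc_Suc_0[of a' b] h_Suc_Suc_0[of a b']
          h_Suc_Suc_Suc[of a' b' 0] 3
        by simp
    next
      case (Suc c')
      have "h (a, Suc b, c') + h (Suc a, b, c') \<le> 2 * h (a, b, c)"
        using less.hyps[of a b c'] less.prems Suc by simp
      with ih_a ih_b show ?thesis
        using h_Suc_Suc_Suc[of a' b c'] h_Suc_Suc_Suc[of a b' c'] h_Suc_Suc_Suc[of a' b' c] 3 Suc
        by simp
    qed
  qed
qed

theorem h_double_transfer: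
  assumes "Suc c \<le> a" "Suc c \<le> b"
  shows "h (Suc a, Suc b, c) \<le> h (a, b, Suc (Suc c))"
  using h_remove_min_le_mean[of c a b] h_add_min_ge_mean[of "Suc c" a b] assms by simp

theorem lemma5:
  fixes l m s :: nat
  assumes "l \<ge> m" and "m \<ge> s" and "m \<ge> s + 2"
  shows "h (l, m, s) \<le> h (l - 1, m - 1, s + 2)"
  using h_double_transfer[of s "l - 1" "m - 1"] assms by simp

end
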